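(* Let $\tau\geq 1$ be a constant and let $u\neq v$ be points in the plane. Consider points $w$ with $\angle wuv\in[0,\pi/2)$, $\angle wvu\in[0,\pi/2)$ and $\tau|vw|<|uv|$, and the ratio $$\frac{|uw|}{|uv|-\tau|vw|}.$$ Then: (1) if $w$ is restricted to a compact segment of a circular arc centered at $u$, the ratio is maximized when $|vw|$ is largest; (2) if $w$ is restricted to a compact segment of a ray emanating from $v$, the ratio is maximized when $|vw|$ is largest; (3) if $w$ is restricted to a compact segment of a ray emanating from $u$, the maximum of the ratio is achieved at the position of $w$ making $|uw|$ largest or at the position making $|uw|$ smallest. *)

theory Defs
  imports "HOL-Analysis.Analysis"
begin

type_synonym point = "real^2"

text \<open>Angle at vertex b between the segments b--a and b--c (value in [0,pi]).
  Convention: if a = b or c = b the angle is pi/2 (as for vangle in the AFP).\<close>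
definition geom_angle :: "point \<Rightarrow> point \<Rightarrow> point \<Rightarrow> real" where
  "geom_angle a b c =
     (if a = b \<or> c = b then pi / 2
      else arccos (((a - b) \<bullet> (c - b)) / (norm (a - b) * norm (c - b))))"

definition arc_segment :: "point \<Rightarrow> real \<Rightarrow> real \<Rightarrow> real \<Rightarrow> point set" where
  "arc_segment c r a b = (\<lambda>\<theta>. c + r *\<^sub>R vector [cos \<theta>, sin \<theta>]) ` {a..b}"

definition ray_segment :: "point \<Rightarrow> point \<Rightarrow> real \<Rightarrow> real \<Rightarrow> point set" where
  "ray_segment p d s t = (\<lambda>x. p + x *\<^sub>R d) ` {s..t}"

definition admissible :: "real \<Rightarrow> point \<Rightarrow> point \<Rightarrow> point \<Rightarrow> bool" where
  "admissible \<tau> u v w \<longleftrightarrow>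
     0 \<le> geom_angle w u v \<and> geom_angle w u v < pi / 2 \<and>
     0 \<le> geom_angle w v u \<and> geom_angle w v u < pi / 2 \<and>
     \<tau> * dist v w < dist u v"

definition ratio :: "real \<Rightarrow> point \<Rightarrow> point \<Rightarrow> point \<Rightarrow> real" where
  "ratio \<tau> u v w = dist u w / (dist u v - \<tau> * dist v w)"

end

theory Submission
  imports Defs
begin

text \<open>On an arc centred at \<open>u\<close> the numerator \<open>|uw|\<close> is constant, so the ratio grows with \<open>|vw|\<close>.
  On a ray from \<open>v\<close>, moving \<open>w\<close> outwards by \<open>\<delta>\<close> lowers the numerator by at most \<open>\<delta>\<close> but the
  denominator by \<open>\<tau>\<delta>\<close>, and the denominator never exceeds the numerator; this makes the ratio
  increase. On a ray from \<open>u\<close> the numerator is linear and the denominator concave in the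
  parameter, so every sublevel set of the ratio is an interval and the maximum is attained at an
  end point.\<close>

lemma norm_vector_cos_sin [simp]: "norm (vector [cos t, sin t] :: real^2) = 1"
  by (simp add: norm_eq_sqrt_inner inner_vec_def sum_2 flip: power2_eq_square)

lemma compact_arc_segment: "compact (arc_segment c r a b)"
proof -
  have eq: "(\<lambda>\<theta>. c + r *\<^sub>R vector [cos \<theta>, sin \<theta>]) =
        (\<lambda>\<theta>. c + r *\<^sub>R (cos \<theta> *\<^sub>R vector [1, 0] + sin \<theta> *\<^sub>R vector [0, 1]) :: point)"
    by (simp add: fun_eq_iff vec_eq_iff forall_2)
  show ?thesis
    unfolding arc_segment_def eq by (intro compact_continuous_image compact_Icc continuous_intros)
qed

lemma compact_ray_segment: "compact (ray_segment p d s t)"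
  unfolding ray_segment_def
  by (intro compact_continuous_image compact_Icc continuous_intros)

lemma dist_centre_arc_segment:
  assumes "r \<ge> 0" "w \<in> arc_segment c r a b"
  shows "dist c w = r"
  using assms unfolding arc_segment_def by (auto simp: dist_norm)

lemma dist_ray_point:
  fixes p d :: "'a::real_normed_vector"
  assumes "x \<ge> 0"
  shows "dist p (p + x *\<^sub>R d) = x * norm d"
  using assms
  by (simp add: dist_norm)

lemma exists_farthest_point:
  fixes S :: "'a::metric_space set"
  assumes "compact S" "S \<noteq> {}"
  shows "\<exists>w0\<in>S. \<forall>w\<in>S. dist v w \<le> dist v w0"
  using continuous_attains_sup[OF assms continuous_on_dist[OF continuous_on_const continuous_on_id]]
  by simp

lemma admissible_denominator_pos: "admissible \<tau> u v w \<Longrightarrow> dist u v - \<tau> * dist v w > 0"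
  unfolding admissible_def by simp

lemma convex_on_dist_line:
  fixes a p d :: "'a::real_normed_vector"
  assumes "convex S"
  shows "convex_on S (\<lambda>x. dist a (p + x *\<^sub>R d))"
proof (rule convex_onI[OF _ assms])
  fix l x y :: real
  assume "0 < l" "l < 1"
  have "a - (p + ((1 - l) *\<^sub>R x + l *\<^sub>R y) *\<^sub>R d) =
        (1 - l) *\<^sub>R (a - (p + x *\<^sub>R d)) + l *\<^sub>R (a - (p + y *\<^sub>R d))"
    by (simp add: algebra_simps)
  then show "dist a (p + ((1 - l) *\<^sub>R x + l *\<^sub>R y) *\<^sub>R d)
             \<le> (1 - l) * dist a (p + x *\<^sub>R d) + l * dist a (p + y *\<^sub>R d)"
    using \<open>0 < l\<close> \<open>l < 1\<close> unfolding dist_norm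
    by (metis abs_of_nonneg less_eq_real_def norm_scaleR norm_triangle_ineq diff_ge_0_iff_ge)
qed

lemma convex_div_concave_le_max:
  fixes f g :: "real \<Rightarrow> real"
  assumes "convex_on {s..t} f" "concave_on {s..t} g" "\<forall>y\<in>{s..t}. g y > 0"
    and "0 \<le> f s" "x \<in> {s..t}"
  shows "f x / g x \<le> max (f s / g s) (f t / g t)"
proof -
  define R where "R = max (f s / g s) (f t / g t)"
  have st: "s \<in> {s..t}" "t \<in> {s..t}" using \<open>x \<in> {s..t}\<close> by auto
  have "f s / g s \<le> R" "f t / g t \<le> R"
    unfolding R_def by auto
  then have endpoints: "f s - R * g s \<le> 0" "f t - R * g t \<le> 0"
    using assms(3) st by (simp_all add: pos_divide_le_eq)
  have "0 \<le> f s / g s"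
    using assms(3,4) st by (simp add: divide_nonneg_pos)
  then have "R \<ge> 0"
    using \<open>f s / g s \<le> R\<close> by linarith
  then have "convex_on {s..t} (\<lambda>y. f y - R * g y)"
    using assms(1,2) convex_on_cmul[of R "{s..t}" "\<lambda>y. - g y"]
    by (intro convex_on_diff) (auto simp: concave_on_def)
  then have "f x - R * g x \<le> 0"
    using convex_on_le_max[OF _ \<open>x \<in> {s..t}\<close>] endpoints by fastforce
  then show ?thesis
    using assms(3,5) unfolding R_def by (simp add: pos_divide_le_eq)
qed

lemma dist_ratio_le_farther:
  fixes u v w w' :: "'a::metric_space"
  assumes tau: "\<tau> \<ge> 1" and between: "dist v w' = dist v w + dist w w'"
    and pos: "dist u v - \<tau> * dist v w' > 0"
  shows "dist u w / (dist u v - \<tau> * dist v w) \<le> dist u w' / (dist u v - \<tau> * dist v w')"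
proof -
  define a b \<delta> A where "a = dist u w" and "b = dist u w'" and "\<delta> = dist w w'"
    and "A = dist u v - \<tau> * dist v w"
  have B: "dist u v - \<tau> * dist v w' = A - \<tau> * \<delta>"
    unfolding A_def \<delta>_def between by (simp add: algebra_simps)
  have "\<tau> * \<delta> \<ge> 0"
    using tau unfolding \<delta>_def by simp
  then have "A > 0"
    using pos unfolding B by linarith
  have "a - b \<le> \<delta>"
    using dist_triangle[of u w w'] unfolding a_def b_def \<delta>_def by (simp add: dist_commute)
  have "dist u v \<le> a + dist v w"
    unfolding a_def by (metis dist_commute dist_triangle)
  moreover have "dist v w \<le> \<tau> * dist v w"
    using tau mult_right_mono[of 1 \<tau> "dist v w"] by simp
  ultimately have "A \<le> a"
    unfolding A_def by linarith
  have "\<delta> * a \<le> \<tau> * (\<delta> * a)"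
    using tau mult_right_mono[of 1 \<tau> "\<delta> * a"] unfolding a_def \<delta>_def by simp
  then have "a * (A - \<tau> * \<delta>) \<le> a * A - \<delta> * a"
    by (simp add: algebra_simps)
  also have "\<dots> \<le> a * A - \<delta> * A"
    using \<open>A \<le> a\<close> by (simp add: \<delta>_def mult_left_mono)
  also have "\<dots> \<le> a * A - (a - b) * A"
    using \<open>a - b \<le> \<delta>\<close> \<open>A > 0\<close> by (simp add: mult_right_mono)
  finally have "a * (A - \<tau> * \<delta>) \<le> b * A"
    by (simp add: algebra_simps)
  then show ?thesis
    using \<open>A > 0\<close> pos unfolding B a_def[symmetric] b_def[symmetric] A_def[symmetric]
    by (simp add: divide_simps mult.commute)
qed

lemma ratio_le_at_farthest_on_arc_segment:
  assumes tau: "\<tau> \<ge> 0" and "r > 0"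
    and adm: "\<forall>w\<in>arc_segment u r a b. admissible \<tau> u v w"
    and w: "w \<in> arc_segment u r a b" and w0: "w0 \<in> arc_segment u r a b"
    and farthest: "\<forall>w\<in>arc_segment u r a b. dist v w \<le> dist v w0"
  shows "ratio \<tau> u v w \<le> ratio \<tau> u v w0"
proof -
  have "dist u w = r" "dist u w0 = r"
    using dist_centre_arc_segment w w0 \<open>r > 0\<close> by auto
  moreover have "\<tau> * dist v w \<le> \<tau> * dist v w0"
    using farthest w tau by (simp add: mult_left_mono)
  ultimately show ?thesis
    using admissible_denominator_pos adm w w0 \<open>r > 0\<close>
    unfolding ratio_def by (intro frac_le) auto
qed

lemma ratio_le_at_farthest_on_ray_segment_from_v:
  assumes tau: "\<tau> \<ge> 1" and "d \<noteq> 0" "0 \<le> s"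
    and adm: "\<forall>w\<in>ray_segment v d s t. admissible \<tau> u v w"
    and w: "w \<in> ray_segment v d s t" and w0: "w0 \<in> ray_segment v d s t"
    and farthest: "\<forall>w\<in>ray_segment v d s t. dist v w \<le> dist v w0"
  shows "ratio \<tau> u v w \<le> ratio \<tau> u v w0"
proof -
  obtain x y where xy: "x \<in> {s..t}" "y \<in> {s..t}"
    and w_eq: "w = v + x *\<^sub>R d" and w0_eq: "w0 = v + y *\<^sub>R d"
    using w w0 unfolding ray_segment_def by auto
  have "x * norm d \<le> y * norm d"
    using farthest w xy \<open>0 \<le> s\<close> dist_ray_point[of x v d] dist_ray_point[of y v d]
    unfolding w_eq w0_eq by auto
  then have "x \<le> y"
    using \<open>d \<noteq> 0\<close> by simp
  then have "dist w w0 = (y - x) * norm d"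
    unfolding w_eq w0_eq by (simp add: dist_norm flip: scaleR_diff_left)
  then have "dist v w0 = dist v w + dist w w0"
    using xy \<open>0 \<le> s\<close> unfolding w_eq w0_eq by (simp add: dist_ray_point algebra_simps)
  then show ?thesis
    unfolding ratio_def using dist_ratio_le_farther tau admissible_denominator_pos adm w0 by blast
qed

lemma ratio_max_on_ray_segment_from_u:
  assumes tau: "\<tau> \<ge> 0" and "0 \<le> s" "s \<le> t"
    and adm: "\<forall>w\<in>ray_segment u d s t. admissible \<tau> u v w"
  shows "\<exists>w0\<in>ray_segment u d s t.
          ((\<forall>w\<in>ray_segment u d s t. dist u w \<le> dist u w0) \<or>
           (\<forall>w\<in>ray_segment u d s t. dist u w0 \<le> dist u w)) \<and>
          (\<forall>w\<in>ray_segment u d s t. ratio \<tau> u v w \<le> ratio \<tau> u v w0)"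
proof -
  define P where "P x = u + x *\<^sub>R d" for x
  define f where "f x = x * norm d" for x
  define g where "g x = dist u v - \<tau> * dist v (P x)" for x
  have ratio_P: "ratio \<tau> u v (P x) = f x / g x" if "x \<in> {s..t}" for x
    using that \<open>0 \<le> s\<close> unfolding ratio_def f_def g_def P_def by (simp add: dist_ray_point)
  have "convex_on {s..t} f"
    unfolding f_def by (simp add: convex_on_def algebra_simps)
  moreover have "convex_on {s..t} (\<lambda>x. \<tau> * dist v (P x))"
    unfolding P_def using tau by (intro convex_on_cmul convex_on_dist_line) auto
  then have "concave_on {s..t} g"
    unfolding g_def by (intro concave_on_diff) (simp_all add: concave_on_const)
  moreover have "\<forall>y\<in>{s..t}. g y > 0"
    using adm admissible_denominator_pos unfolding g_def P_def ray_segment_def by blast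
  ultimately have ratio_le: "ratio \<tau> u v (P x) \<le> max (ratio \<tau> u v (P s)) (ratio \<tau> u v (P t))"
    if "x \<in> {s..t}" for x
    using that convex_div_concave_le_max[of s t f g x] \<open>0 \<le> s\<close> \<open>s \<le> t\<close> ratio_P
    by (simp add: f_def)
  have dist_mono: "dist u (P x) \<le> dist u (P y)" if "x \<in> {s..t}" "y \<in> {s..t}" "x \<le> y" for x y
    using that \<open>0 \<le> s\<close> by (simp add: P_def dist_ray_point mult_right_mono)
  have seg: "ray_segment u d s t = P ` {s..t}"
    unfolding ray_segment_def P_def by simp
  show ?thesis
  proof (cases "ratio \<tau> u v (P s) \<le> ratio \<tau> u v (P t)")
    case True
    then show ?thesis
      using ratio_le dist_mono \<open>s \<le> t\<close> unfolding seg by (intro bexI[of _ "P t"]) auto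
  next
    case False
    then show ?thesis
      using ratio_le dist_mono \<open>s \<le> t\<close> unfolding seg by (intro bexI[of _ "P s"]) auto
  qed
qed

theorem lemma3:
  fixes \<tau> :: real and u v :: point
  assumes tau: "\<tau> \<ge> 1" and uv: "u \<noteq> v"
  shows
   "(\<forall>r a b. r > 0 \<and> a \<le> b \<and> (\<forall>w\<in>arc_segment u r a b. admissible \<tau> u v w) \<longrightarrow>
      (\<exists>w0\<in>arc_segment u r a b. \<forall>w\<in>arc_segment u r a b. dist v w \<le> dist v w0) \<and>
      (\<forall>w0\<in>arc_segment u r a b. (\<forall>w\<in>arc_segment u r a b. dist v w \<le> dist v w0) \<longrightarrow>
          (\<forall>w\<in>arc_segment u r a b. ratio \<tau> u v w \<le> ratio \<tau> u v w0)))
    \<and>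
    (\<forall>d s t. d \<noteq> 0 \<and> 0 \<le> s \<and> s \<le> t \<and> (\<forall>w\<in>ray_segment v d s t. admissible \<tau> u v w) \<longrightarrow>
      (\<exists>w0\<in>ray_segment v d s t. \<forall>w\<in>ray_segment v d s t. dist v w \<le> dist v w0) \<and>
      (\<forall>w0\<in>ray_segment v d s t. (\<forall>w\<in>ray_segment v d s t. dist v w \<le> dist v w0) \<longrightarrow>
          (\<forall>w\<in>ray_segment v d s t. ratio \<tau> u v w \<le> ratio \<tau> u v w0)))
    \<and>
    (\<forall>d s t. d \<noteq> 0 \<and> 0 \<le> s \<and> s \<le> t \<and> (\<forall>w\<in>ray_segment u d s t. admissible \<tau> u v w) \<longrightarrow>
      (\<exists>w0\<in>ray_segment u d s t.
          ((\<forall>w\<in>ray_segment u d s t. dist u w \<le> dist u w0) \<or>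
           (\<forall>w\<in>ray_segment u d s t. dist u w0 \<le> dist u w)) \<and>
          (\<forall>w\<in>ray_segment u d s t. ratio \<tau> u v w \<le> ratio \<tau> u v w0)))"
proof ((intro conjI allI impI ballI; elim conjE), goal_cases)
  case (1 r a b)
  then show ?case
    by (intro exists_farthest_point compact_arc_segment) (auto simp: arc_segment_def)
next
  case (2 r a b w0 w)
  show ?case
    by (rule ratio_le_at_farthest_on_arc_segment) (use 2 tau in auto)
next
  case (3 d s t)
  then show ?case
    by (intro exists_farthest_point compact_ray_segment) (auto simp: ray_segment_def)
next
  case (4 d s t w0 w)
  show ?case
    by (rule ratio_le_at_farthest_on_ray_segment_from_v) (use 4 tau in auto)
next
  case (5 d s t)
  show ?case
    by (rule ratio_max_on_ray_segment_from_u) (use 5 tau in auto)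
qed

end
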